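(* Let $s,t\ge0$ be integers. For each integer $m$ with $0\le m<q^{b-1}$ let $\Psi_m=\{(i,j)\in\mathbb{Z}^2:\ 0\le i<q^c-1,\ \ -t\le q^{a-1}N_b\,i-q^{b-1}N_c\,j+N_cm,\ \ -s-(q^c-1)q\le -q^ai+(q^c-1)j\}$. Then $$\#\Psi_m=\frac{(q^c+1)q}{2}+(q-1)\left\lfloor\frac{t+N_cm}{q^{b-1}}\right\rfloor+s,$$ and $$\sum_{m=0}^{q^{b-1}-1}\#\Psi_m=\frac12\left(q^{c+b-1}+q^{c+b}-q^c+q\right)+q^{b-1}s+(q-1)t.$$
   Context: $q$ is a power of a prime $p$, $b\ge1$ an integer, $a=b+1$, $c=a+b$, and $N_k=(q^k-1)/(q-1)$ for $k\ge1$. *)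

theory Defs
  imports Complex_Main "HOL-Computational_Algebra.Primes"
begin

text \<open>N_k = (q^k - 1)/(q - 1); exact division for q \<ge> 2.\<close>
definition NN :: "int \<Rightarrow> nat \<Rightarrow> int" where
  "NN q k = (q ^ k - 1) div (q - 1)"

definition Psi :: "int \<Rightarrow> nat \<Rightarrow> int \<Rightarrow> int \<Rightarrow> int \<Rightarrow> (int \<times> int) set" where
  "Psi q b s t m = (let a = b + 1; c = a + b in
     {(i, j). 0 \<le> i \<and> i < q ^ c - 1 \<and>
        - t \<le> q ^ (a - 1) * NN q b * i - q ^ (b - 1) * NN q c * j + NN q c * m \<and>
        - s - (q ^ c - 1) * q \<le> - (q ^ a) * i + (q ^ c - 1) * j})"

end

(*
  For fixed i the two inequalities defining Psi_m confine j to an integer interval with ends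
  ceil((q^a i - s)/(q^c - 1)) - q and floor((q^(a-1) N_b i + N_c m + t)/(q^(b-1) N_c)).
  The shift by -q makes upper - lower + 1 nonnegative in every column, so #Psi_m is the sum
  of upper - lower + 1 over 0 <= i < q^c - 1. Both ends are floors of (a i + y)/n with a
  coprime to n, summed over whole periods of i mod n (coprimality because N_c = 1 mod q and
  mod N_b, and q^(b+1) q^b = 1 mod q^c - 1); there the remainders run through each residue
  equally often, which gives closed forms. Summing over m is the same computation once more,
  now with modulus q^(b-1).
*)

theory Submission
  imports Defs
begin

section \<open>Sums of floors of linear functions\<close>

lemma int_le_div_iff_mult_le:
  fixes j x n :: int
  assumes "n > 0"
  shows "j \<le> x div n \<longleftrightarrow> j * n \<le> x"
proof -
  have "j \<le> x div n \<longleftrightarrow> real_of_int j \<le> real_of_int x / real_of_int n"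
    by (metis floor_divide_of_int_eq le_floor_iff)
  also have "\<dots> \<longleftrightarrow> j * n \<le> x"
    using assms by (simp add: pos_le_divide_eq flip: of_int_mult)
  finally show ?thesis .
qed

lemma double_gauss_sum_int: "2 * (\<Sum>i\<in>{0..<int N}. i) = int N * (int N - 1)"
proof (induction N)
  case 0
  then show ?case by simp
next
  case (Suc N)
  have "{0..<int (Suc N)} = insert (int N) {0..<int N}"
    by auto
  with Suc show ?case by (simp add: algebra_simps)
qed

lemma sum_mod_linear_period:
  fixes a y n k :: int
  assumes "n > 0" and "coprime a n"
  shows "(\<Sum>i\<in>{k..<k+n}. (a*i + y) mod n) = (\<Sum>r\<in>{0..<n}. r)"
proof -
  let ?f = "\<lambda>i. (a*i + y) mod n"
  have inj: "inj_on ?f {k..<k+n}"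
  proof
    fix i j assume i: "i \<in> {k..<k+n}" and j: "j \<in> {k..<k+n}" and "?f i = ?f j"
    then have "n dvd a * (i - j)"
      by (simp add: mod_eq_dvd_iff algebra_simps)
    then have "n dvd i - j"
      using \<open>coprime a n\<close> by (simp add: coprime_commute coprime_dvd_mult_right_iff)
    moreover have "\<bar>i - j\<bar> < n"
      using i j by auto
    ultimately show "i = j"
      using dvd_imp_le_int[of "i - j" n] \<open>n > 0\<close> by fastforce
  qed
  have "?f ` {k..<k+n} \<subseteq> {0..<n}"
    using \<open>n > 0\<close> by auto
  moreover have "card (?f ` {k..<k+n}) = card {0..<n}"
    using card_image[OF inj] by simp
  ultimately have "bij_betw ?f {k..<k+n} {0..<n}"
    using inj by (simp add: bij_betw_def card_subset_eq)
  then show ?thesis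
    by (rule sum.reindex_bij_betw)
qed

lemma sum_mod_linear_periods:
  fixes a y n :: int and K :: nat
  assumes "n > 0" and "coprime a n"
  shows "2 * (\<Sum>i\<in>{0..<int K * n}. (a*i + y) mod n) = int K * n * (n - 1)"
proof (induction K)
  case 0
  then show ?case by simp
next
  case (Suc K)
  have "0 \<le> int K * n"
    using \<open>n > 0\<close> by simp
  then have "{0..<int (Suc K) * n} = {0..<int K * n} \<union> {int K * n..<int K * n + n}"
    using \<open>n > 0\<close> by (subst ivl_disj_un_two(3)) (simp_all add: algebra_simps)
  then have "(\<Sum>i\<in>{0..<int (Suc K) * n}. (a*i + y) mod n)
      = (\<Sum>i\<in>{0..<int K * n}. (a*i + y) mod n) + (\<Sum>r\<in>{0..<n}. r)"
    using sum_mod_linear_period[OF assms] by (simp add: sum.union_disjoint)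
  then show ?case
    using Suc double_gauss_sum_int[of "nat n"] \<open>n > 0\<close> by (simp add: algebra_simps)
qed

text \<open>Over whole periods the fractional parts of \<open>(a i + y) / n\<close> average to \<open>(n - 1) / (2 n)\<close>.\<close>

lemma sum_div_linear_periods:
  fixes a y n :: int and K :: nat
  assumes "n > 0" and "coprime a n"
  defines "L \<equiv> int K * n"
  shows "2 * n * (\<Sum>i\<in>{0..<L}. (a*i + y) div n) = L * (a * (L - 1) + 2*y - (n - 1))"
proof -
  have "n * (\<Sum>i\<in>{0..<L}. (a*i + y) div n) = (\<Sum>i\<in>{0..<L}. (a*i + y) - (a*i + y) mod n)"
    by (simp add: sum_distrib_left minus_mod_eq_mult_div)
  also have "\<dots> = a * (\<Sum>i\<in>{0..<L}. i) + L * y - (\<Sum>i\<in>{0..<L}. (a*i + y) mod n)"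
    using \<open>n > 0\<close> by (simp add: L_def sum_subtractf sum.distrib sum_distrib_left)
  moreover have "2 * (\<Sum>i\<in>{0..<L}. i) = L * (L - 1)"
    using double_gauss_sum_int[of "K * nat n"] \<open>n > 0\<close> by (simp add: L_def)
  moreover have "2 * (\<Sum>i\<in>{0..<L}. (a*i + y) mod n) = L * (n - 1)"
    using sum_mod_linear_periods[OF assms(1,2)] by (simp add: L_def)
  ultimately show ?thesis
    by algebra
qed

section \<open>The numbers \<open>N\<^sub>k\<close>\<close>

lemma NN_mult:
  assumes "(q::int) \<noteq> 1"
  shows "(q - 1) * NN q k = q ^ k - 1"
  using assms unfolding NN_def power_diff_1_eq by simp

lemma NN_add:
  assumes "(q::int) \<noteq> 1"
  shows "NN q (j + k) = NN q j + q ^ j * NN q k"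
proof -
  have "(q - 1) * (NN q j + q ^ j * NN q k) = (q - 1) * NN q j + q ^ j * ((q - 1) * NN q k)"
    by (simp add: algebra_simps)
  also have "\<dots> = q ^ (j + k) - 1"
    using assms by (simp add: NN_mult power_add right_diff_distrib)
  also have "\<dots> = (q - 1) * NN q (j + k)"
    using assms by (simp add: NN_mult)
  finally show ?thesis
    using assms by simp
qed

lemma NN_Suc: "(q::int) \<noteq> 1 \<Longrightarrow> NN q (Suc k) = q * NN q k + 1"
  using NN_add[of q 1 k] by (simp add: NN_def)

lemma NN_pos:
  assumes "(q::int) > 1" and "k \<ge> 1"
  shows "NN q k > 0"
proof -
  have "(q - 1) * NN q k > 0"
    using assms NN_mult[of q k] one_less_power[of q k] by simp
  then show ?thesis
    using assms by (simp add: zero_less_mult_iff)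
qed

lemma coprime_mult_diff_one: "coprime (a::int) (k * a - 1)"
proof -
  have "gcd a (k * a + (- 1)) = 1"
    by (simp only: gcd_add_mult) simp
  then show ?thesis
    by (simp add: coprime_iff_gcd_eq_1)
qed

lemma coprime_NN_Suc: "(q::int) \<noteq> 1 \<Longrightarrow> coprime q (NN q (Suc k))"
  by (metis NN_Suc coprime_iff_gcd_eq_1 gcd_add_mult gcd.commute gcd_1_int mult.commute)

lemma coprime_NN_double_Suc:
  assumes "(q::int) \<noteq> 1"
  shows "coprime (NN q k) (NN q (2*k+1))"
proof -
  have "NN q (2*k+1) = NN q (Suc k + k)"
    by (simp add: mult_2)
  also have "\<dots> = (q + q ^ (k+1)) * NN q k + 1"
    using NN_add[OF assms, of "Suc k" k] NN_Suc[OF assms, of k] by (simp add: algebra_simps)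
  finally show ?thesis
    by (metis coprime_iff_gcd_eq_1 gcd_add_mult gcd_1_int)
qed

section \<open>Counting the points of \<open>\<Psi>\<^sub>m\<close> column by column\<close>

text \<open>Column \<open>i\<close> of \<open>\<Psi>\<^sub>m\<close> is the integer interval from \<open>\<lceil>(q\<^sup>a i - s)/(q\<^sup>c - 1)\<rceil> - q\<close> to
  \<open>\<lfloor>(q\<^sup>a\<^sup>-\<^sup>1 N\<^sub>b i + N\<^sub>c m + t)/(q\<^sup>b\<^sup>-\<^sup>1 N\<^sub>c)\<rfloor>\<close>; in the latter the division by \<open>q\<^sup>b\<^sup>-\<^sup>1\<close> is
  carried out first, which isolates the only term depending on \<open>m\<close>.\<close>

definition Psi_upper :: "int \<Rightarrow> nat \<Rightarrow> int \<Rightarrow> int \<Rightarrow> int \<Rightarrow> int" where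
  "Psi_upper q b t m i = (q * NN q b * i + (NN q (2*b+1) * m + t) div q ^ (b - 1)) div NN q (2*b+1)"

definition Psi_lower :: "int \<Rightarrow> nat \<Rightarrow> int \<Rightarrow> int \<Rightarrow> int" where
  "Psi_lower q b s i = - ((s - q ^ (b+1) * i) div (q ^ (2*b+1) - 1)) - q"

context
  fixes q :: int and b :: nat
  assumes q_ge_2: "q \<ge> 2" and b_ge_1: "b \<ge> 1"
begin

lemma mem_Psi_iff:
  "(i, j) \<in> Psi q b s t m \<longleftrightarrow>
     0 \<le> i \<and> i < q ^ (2*b+1) - 1 \<and> Psi_lower q b s i \<le> j \<and> j \<le> Psi_upper q b t m i"
proof -
  define n where "n = NN q (2*b+1)"
  define M where "M = q ^ (b - 1)"
  define D where "D = q ^ (2*b+1) - 1"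
  have "n > 0" and "M > 0"
    using q_ge_2 NN_pos[of q "2*b+1"] by (simp_all add: n_def M_def)
  have "D > 0"
    using q_ge_2 one_less_power[of q "2*b+1"] by (simp add: D_def)
  have "q ^ b = q * M"
    using b_ge_1 by (simp add: M_def flip: power_Suc)
  have upper: "- t \<le> q ^ b * NN q b * i - M * n * j + n * m \<longleftrightarrow> j \<le> Psi_upper q b t m i"
  proof -
    have "j \<le> Psi_upper q b t m i \<longleftrightarrow> j * n \<le> q * NN q b * i + (n * m + t) div M"
      unfolding Psi_upper_def n_def[symmetric] M_def[symmetric]
      by (rule int_le_div_iff_mult_le[OF \<open>n > 0\<close>])
    also have "\<dots> \<longleftrightarrow> j * n - q * NN q b * i \<le> (n * m + t) div M"
      by linarith
    also have "\<dots> \<longleftrightarrow> (j * n - q * NN q b * i) * M \<le> n * m + t"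
      using \<open>M > 0\<close> by (rule int_le_div_iff_mult_le)
    finally show ?thesis
      using \<open>q ^ b = q * M\<close> by (auto simp: algebra_simps)
  qed
  have lower: "- s - D * q \<le> - (q ^ (b+1)) * i + D * j \<longleftrightarrow> Psi_lower q b s i \<le> j"
  proof -
    have "Psi_lower q b s i \<le> j \<longleftrightarrow> - (j + q) \<le> (s - q ^ (b+1) * i) div D"
      by (auto simp: Psi_lower_def D_def)
    also have "\<dots> \<longleftrightarrow> - (j + q) * D \<le> s - q ^ (b+1) * i"
      using \<open>D > 0\<close> by (rule int_le_div_iff_mult_le)
    finally show ?thesis
      by (auto simp: algebra_simps)
  qed
  have "b + 1 + b = 2*b+1" and "b + 1 - 1 = b"
    by simp_all
  then show ?thesis
    unfolding Psi_def Let_def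
    by (simp only: n_def[symmetric] M_def[symmetric] D_def[symmetric] upper lower
        mem_Collect_eq prod.case) blast
qed

lemma Psi_eq_Sigma:
  "Psi q b s t m = (SIGMA i:{0..<q ^ (2*b+1) - 1}. {Psi_lower q b s i..Psi_upper q b t m i})"
  by (auto simp: mem_Psi_iff)

text \<open>With \<open>D = q\<^sup>c - 1\<close>, the identity \<open>D N\<^sub>b = N\<^sub>c (q\<^sup>b - 1)\<close> shows that the slopes in \<open>i\<close> of
  the two bounds differ by exactly \<open>q / D\<close>, so for \<open>i < D\<close> the shift \<open>-q\<close> in the lower bound
  compensates.\<close>

lemma Psi_lower_le_upper_plus_one:
  assumes "0 \<le> s" and "0 \<le> t" and "0 \<le> m" and "0 \<le> i" and "i < q ^ (2*b+1) - 1"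
  shows "Psi_lower q b s i \<le> Psi_upper q b t m i + 1"
proof (rule ccontr)
  define n where "n = NN q (2*b+1)"
  define D where "D = q ^ (2*b+1) - 1"
  define Q where "Q = q ^ b"
  define w where "w = (n * m + t) div q ^ (b - 1)"
  define u where "u = Psi_upper q b t m i"
  assume "\<not> Psi_lower q b s i \<le> u + 1"
  have "n > 0"
    using q_ge_2 NN_pos[of q "2*b+1"] by (simp add: n_def)
  have "D > 0"
    using q_ge_2 one_less_power[of q "2*b+1"] by (simp add: D_def)
  have "q \<noteq> 1"
    using q_ge_2 by simp
  then have "(q - 1) * NN q b = Q - 1" and "(q - 1) * n = D"
    by (simp_all add: NN_mult Q_def n_def D_def)
  then have "(q - 1) * (D * NN q b) = (q - 1) * (n * (Q - 1))"
    by algebra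
  then have D_NN_b: "D * NN q b = n * (Q - 1)"
    using q_ge_2 by simp
  have "w \<ge> 0"
    using assms q_ge_2 \<open>n > 0\<close> by (simp add: w_def pos_imp_zdiv_nonneg_iff)
  have floor_bound: "x < (x div d + 1) * d" if "d > 0" for x d :: int
    using int_le_div_iff_mult_le[OF that, of "x div d + 1" x] by simp
  have "q * NN q b * i < (u + 1) * n"
    using floor_bound[OF \<open>n > 0\<close>, of "q * NN q b * i + w"] \<open>w \<ge> 0\<close>
    by (simp add: u_def w_def n_def Psi_upper_def)
  then have "n * (q * (Q - 1) * i) < n * (D * (u + 1))"
    using D_NN_b \<open>D > 0\<close> by (smt (verit) mult.assoc mult.commute mult_strict_left_mono)
  then have upper: "q * (Q - 1) * i < D * (u + 1)"
    using \<open>n > 0\<close> by simp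
  have "(- ((s - q * Q * i) div D)) * D < q * Q * i - s + D"
    using floor_bound[OF \<open>D > 0\<close>, of "s - q * Q * i"] by (simp add: algebra_simps)
  then have lower: "D * (Psi_lower q b s i + q - 1) < q * Q * i"
    using \<open>0 \<le> s\<close> by (simp add: Psi_lower_def D_def Q_def algebra_simps)
  have "D * (u + 1 + q) \<le> D * (Psi_lower q b s i + q - 1)"
    using \<open>\<not> Psi_lower q b s i \<le> u + 1\<close> \<open>D > 0\<close> by simp
  with upper lower have "q * D < q * i"
    by (simp add: algebra_simps)
  then show False
    using assms(5) q_ge_2 by (simp add: D_def)
qed

lemma card_Psi:
  assumes "0 \<le> s" and "0 \<le> t" and "0 \<le> m"
  shows "int (card (Psi q b s t m))
    = (\<Sum>i\<in>{0..<q ^ (2*b+1) - 1}. Psi_upper q b t m i - Psi_lower q b s i + 1)"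
proof -
  have "card (Psi q b s t m)
      = (\<Sum>i\<in>{0..<q ^ (2*b+1) - 1}. card {Psi_lower q b s i..Psi_upper q b t m i})"
    unfolding Psi_eq_Sigma by (rule card_SigmaI) auto
  then have "int (card (Psi q b s t m))
      = (\<Sum>i\<in>{0..<q ^ (2*b+1) - 1}. int (nat (Psi_upper q b t m i - Psi_lower q b s i + 1)))"
    by (simp add: of_nat_sum)
  also have "\<dots> = (\<Sum>i\<in>{0..<q ^ (2*b+1) - 1}. Psi_upper q b t m i - Psi_lower q b s i + 1)"
  proof (rule sum.cong[OF refl])
    fix i assume "i \<in> {0..<q ^ (2*b+1) - 1}"
    then have "Psi_lower q b s i \<le> Psi_upper q b t m i + 1"
      using Psi_lower_le_upper_plus_one[OF assms] by simp
    then show "int (nat (Psi_upper q b t m i - Psi_lower q b s i + 1))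
        = Psi_upper q b t m i - Psi_lower q b s i + 1"
      by simp
  qed
  finally show ?thesis .
qed

lemma double_sum_Psi_upper:
  "2 * (\<Sum>i\<in>{0..<q ^ (2*b+1) - 1}. Psi_upper q b t m i)
    = (q - 1) * (q * NN q b * (q ^ (2*b+1) - 2)
        + 2 * ((NN q (2*b+1) * m + t) div q ^ (b - 1)) - NN q (2*b+1) + 1)"
proof -
  define n where "n = NN q (2*b+1)"
  define D where "D = q ^ (2*b+1) - 1"
  define w where "w = (n * m + t) div q ^ (b - 1)"
  define X where "X = q * NN q b * (D - 1) + 2 * w - (n - 1)"
  have "n > 0"
    using q_ge_2 NN_pos[of q "2*b+1"] by (simp add: n_def)
  have D_eq: "int (nat (q - 1)) * n = D"
    using q_ge_2 NN_mult[of q "2*b+1"] by (simp add: n_def D_def)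
  have coprime: "coprime (q * NN q b) n"
    using q_ge_2 coprime_NN_Suc[of q "2*b"] coprime_NN_double_Suc[of q b] by (simp add: n_def)
  have "2 * n * (\<Sum>i\<in>{0..<D}. (q * NN q b * i + w) div n) = D * X"
    using sum_div_linear_periods[OF \<open>n > 0\<close> coprime, where K = "nat (q - 1)" and y = w]
    unfolding D_eq X_def .
  also have "D * X = n * ((q - 1) * X)"
    using D_eq q_ge_2 by (simp add: mult.commute)
  finally have "2 * (\<Sum>i\<in>{0..<D}. (q * NN q b * i + w) div n) = (q - 1) * X"
    using \<open>n > 0\<close> by simp
  then show ?thesis
    by (simp add: Psi_upper_def X_def n_def D_def w_def diff_diff_eq add.commute)
qed

lemma double_sum_Psi_lower:
  "2 * (\<Sum>i\<in>{0..<q ^ (2*b+1) - 1}. Psi_lower q b s i)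
    = (q ^ (b+1) + 1) * (q ^ (2*b+1) - 2) - 2 * s - 2 * q * (q ^ (2*b+1) - 1)"
proof -
  define D where "D = q ^ (2*b+1) - 1"
  define X where "X = - (q ^ (b+1)) * (D - 1) + 2 * s - (D - 1)"
  have "D > 0"
    using q_ge_2 one_less_power[of q "2*b+1"] by (simp add: D_def)
  have "2*b+1 = b + (b+1)"
    by simp
  then have "D = q ^ b * q ^ (b+1) - 1"
    unfolding D_def by (simp only: power_add)
  then have coprime: "coprime (- (q ^ (b+1))) D"
    using coprime_mult_diff_one by simp
  have "2 * D * (\<Sum>i\<in>{0..<D}. (- (q ^ (b+1)) * i + s) div D) = D * X"
    using sum_div_linear_periods[OF \<open>D > 0\<close> coprime, where K = 1 and y = s]
    unfolding X_def by simp
  then have "2 * (\<Sum>i\<in>{0..<D}. (s - q ^ (b+1) * i) div D) = X"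
    using \<open>D > 0\<close> by (simp add: mult.assoc)
  moreover have "(\<Sum>i\<in>{0..<D}. Psi_lower q b s i) = - (\<Sum>i\<in>{0..<D}. (s - q ^ (b+1) * i) div D) - q * D"
    using \<open>D > 0\<close> by (simp add: Psi_lower_def D_def sum_subtractf sum_negf)
  ultimately show ?thesis
    unfolding X_def by (simp add: D_def algebra_simps)
qed

lemma double_card_Psi:
  assumes "0 \<le> s" and "0 \<le> t" and "0 \<le> m"
  shows "2 * int (card (Psi q b s t m))
    = (q ^ (2*b+1) + 1) * q + 2 * ((q - 1) * ((t + NN q (2*b+1) * m) div q ^ (b - 1)) + s)"
proof -
  define Q where "Q = q ^ b"
  define D where "D = q ^ (2*b+1) - 1"
  define w where "w = (NN q (2*b+1) * m + t) div q ^ (b - 1)"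
  define SU where "SU = (\<Sum>i\<in>{0..<D}. Psi_upper q b t m i)"
  define SL where "SL = (\<Sum>i\<in>{0..<D}. Psi_lower q b s i)"
  have powers: "q ^ (2*b+1) = q * Q * Q" "q ^ (b+1) = q * Q"
    unfolding Q_def mult_2 power_add power_one_right by (simp_all add: mult_ac)
  have "D > 0"
    using q_ge_2 one_less_power[of q "2*b+1"] by (simp add: D_def)
  then have "int (card (Psi q b s t m)) = SU - SL + D"
    using card_Psi[OF assms] by (simp add: SU_def SL_def D_def sum.distrib sum_subtractf)
  moreover have "2 * SU = (q - 1) * (q * NN q b * (D - 1) + 2 * w - NN q (2*b+1) + 1)"
    using double_sum_Psi_upper[of t m] by (simp add: SU_def D_def w_def)
  moreover have "2 * SL = (q * Q + 1) * (D - 1) - 2 * s - 2 * q * D"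
    using double_sum_Psi_lower[of s] by (simp add: SL_def D_def flip: powers(2))
  moreover have "(q - 1) * NN q b = Q - 1" and "(q - 1) * NN q (2*b+1) = D"
    using q_ge_2 by (simp_all add: NN_mult Q_def D_def)
  moreover have "D = q * Q * Q - 1"
    by (simp only: D_def powers(1))
  ultimately show ?thesis
    unfolding powers(1) w_def[symmetric] add.commute[of t] by algebra
qed

lemma double_sum_card_Psi:
  assumes "0 \<le> s" and "0 \<le> t"
  shows "2 * int (\<Sum>m\<in>{0..<q ^ (b - 1)}. card (Psi q b s t m))
    = q ^ (2*b+1 + b - 1) + q ^ (2*b+1 + b) - q ^ (2*b+1) + q + 2 * (q ^ (b - 1) * s + (q - 1) * t)"
proof -
  define M where "M = q ^ (b - 1)"
  define n where "n = NN q (2*b+1)"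
  define C where "C = q ^ (2*b+1)"
  define W where "W = (\<Sum>m\<in>{0..<M}. (n * m + t) div M)"
  have "M > 0"
    using q_ge_2 by (simp add: M_def)
  have "2 * int (\<Sum>m\<in>{0..<M}. card (Psi q b s t m))
      = (\<Sum>m\<in>{0..<M}. (C + 1) * q + 2 * ((q - 1) * ((n * m + t) div M) + s))"
    using double_card_Psi[OF assms] unfolding of_nat_sum sum_distrib_left
    by (intro sum.cong) (simp_all add: M_def n_def C_def add.commute)
  also have "\<dots> = M * ((C + 1) * q) + 2 * ((q - 1) * W + M * s)"
    using \<open>M > 0\<close> by (simp add: W_def sum.distrib sum_distrib_left)
  finally have card_sum: "2 * int (\<Sum>m\<in>{0..<M}. card (Psi q b s t m))
      = M * ((C + 1) * q) + 2 * ((q - 1) * W + M * s)" .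
  have "coprime n M"
    using q_ge_2 coprime_NN_Suc[of q "2*b"] by (simp add: n_def M_def coprime_commute)
  then have "2 * M * W = M * (n * (M - 1) + 2 * t - (M - 1))"
    using sum_div_linear_periods[OF \<open>M > 0\<close>, where K = 1 and y = t] by (simp add: W_def)
  then have "2 * W = n * (M - 1) + 2 * t - (M - 1)"
    using \<open>M > 0\<close> by (simp add: mult.assoc)
  moreover have "(q - 1) * n = C - 1"
    using q_ge_2 by (simp add: NN_mult n_def C_def)
  moreover have "2*b+1 + b - 1 = (2*b+1) + (b - 1)" and "2*b+1 + b = (2*b+1) + 1 + (b - 1)"
    using b_ge_1 by simp_all
  then have powers: "q ^ (2*b+1 + b - 1) = C * M" "q ^ (2*b+1 + b) = C * q * M"
    unfolding C_def M_def by (simp_all only: power_add power_one_right)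
  ultimately show ?thesis
    unfolding powers M_def[symmetric] C_def[symmetric] card_sum by algebra
qed

end

theorem lemma2:
  fixes q p :: int and e b :: nat and s t :: int
  assumes "prime p" and "e \<ge> 1" and "q = p ^ e"
    and "b \<ge> 1" and "s \<ge> 0" and "t \<ge> 0"
  shows "(\<forall>m::int. 0 \<le> m \<and> m < q ^ (b - 1) \<longrightarrow>
            real (card (Psi q b s t m)) =
              real_of_int ((q ^ (2*b+1) + 1) * q) / 2
              + real_of_int (q - 1) * real_of_int \<lfloor>real_of_int (t + NN q (2*b+1) * m) / real_of_int (q ^ (b - 1))\<rfloor>
              + real_of_int s)
       \<and> real (\<Sum>m\<in>{0..<q ^ (b - 1)}. card (Psi q b s t m)) =
           real_of_int (q ^ (2*b+1 + b - 1) + q ^ (2*b+1 + b) - q ^ (2*b+1) + q) / 2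
           + real_of_int (q ^ (b - 1) * s + (q - 1) * t)"
proof -
  have "q \<ge> 2"
    using prime_ge_2_int[OF assms(1)] assms(2,3) power_increasing[of 1 e p] by simp
  have half: "real n = real_of_int a / 2 + real_of_int c" if "2 * int n = a + 2 * c"
    for n :: nat and a c :: int
    using that by linarith
  show ?thesis
    unfolding floor_divide_of_int_eq
    using half[OF double_card_Psi[OF \<open>q \<ge> 2\<close> assms(4-6)]]
      half[OF double_sum_card_Psi[OF \<open>q \<ge> 2\<close> assms(4-6)]]
    by simp
qed

end
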